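(* For every $h\in\widehat{\operatorname{PC}^{\bowtie}}$ there exist order-preserving homeomorphisms $\phi,\psi$ of $[0,1[$ and elements $f,g\in\widehat{\operatorname{IET}^{\bowtie}}$ such that $h=\psi\circ f=g\circ\phi$.
   Context: $X=[0,1[$. $\widehat{\operatorname{PC}^{\bowtie}}$ is the group of bijections $X\to X$ continuous outside a finite subset of $X$. $\widehat{\operatorname{IET}^{\bowtie}}$ is the subgroup of bijections $f$ for which there is a finite partition of $X$ into intervals $[a,b[$ such that on each open interval $]a,b[$, $f$ is of the form $x\mapsto x+c$ or $x\mapsto -x+c$. *)

theory Defs
  imports "HOL-Analysis.Analysis"
begin

definition X :: "real set" where "X = {0..<1}"

definition PC_hat :: "(real \<Rightarrow> real) set" where
  "PC_hat = {h. bij_betw h X X \<and>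
      (\<exists>F. finite F \<and> (\<forall>x\<in>X - F. continuous (at x within X) h))}"

definition IET_hat :: "(real \<Rightarrow> real) set" where
  "IET_hat = {f. bij_betw f X X \<and>
      (\<exists>(a::nat \<Rightarrow> real) n. a 0 = 0 \<and> a n = 1 \<and> (\<forall>i<n. a i < a (Suc i)) \<and>
         (\<forall>i<n. \<exists>c. (\<forall>x\<in>{a i<..<a (Suc i)}. f x = x + c) \<or>
                      (\<forall>x\<in>{a i<..<a (Suc i)}. f x = - x + c)))}"

definition ord_homeo :: "(real \<Rightarrow> real) \<Rightarrow> bool" where
  "ord_homeo \<phi> \<longleftrightarrow> (\<exists>\<phi>'. homeomorphism X X \<phi> \<phi>') \<and> mono_on X \<phi>"

end

theory Submission
  imports Defs
begin

text \<open>Choose a partition a of X such that h is continuous on every open piece ]a i, a (i+1)[.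
  Being injective, h maps each piece monotonically onto an open interval J i, and these intervals
  tile X up to finitely many points, so their lengths add up to 1. Laying the J i end to end in
  the order of the pieces gives a second partition S of X, and the map \<phi> that sends a i to S i and
  x in the i-th piece to S i plus the distance of h x from the end of J i approached at a i is an
  increasing homeomorphism of X for which h \<circ> \<phi>\<inverse> is a translation or a flip on each piece of S.
  Since h\<inverse> is again piecewise continuous, writing h\<inverse> = g \<circ> \<phi> and inverting gives h = \<phi>\<inverse> \<circ> g\<inverse>,
  and the inverse of an element of IET_hat lies in IET_hat.\<close>

section \<open>Partitions of X\<close>

abbreviation piece :: "(nat \<Rightarrow> real) \<Rightarrow> nat \<Rightarrow> real set" where
  "piece a i \<equiv> {a i<..<a (Suc i)}"

abbreviation cell :: "(nat \<Rightarrow> real) \<Rightarrow> nat \<Rightarrow> real set" where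
  "cell a i \<equiv> {a i..<a (Suc i)}"

definition is_partition :: "(nat \<Rightarrow> real) \<Rightarrow> nat \<Rightarrow> bool" where
  "is_partition a n \<longleftrightarrow> a 0 = 0 \<and> a n = 1 \<and> (\<forall>i<n. a i < a (Suc i))"

lemma is_partition_less:
  assumes "is_partition a n" "i < j" "j \<le> n"
  shows "a i < a j"
  using assms(2,3)
proof (induction j)
  case (Suc j)
  then have "a j < a (Suc j)" using assms(1) by (auto simp: is_partition_def)
  with Suc show ?case by (cases "i = j") auto
qed simp

lemma is_partition_le: "is_partition a n \<Longrightarrow> i \<le> j \<Longrightarrow> j \<le> n \<Longrightarrow> a i \<le> a j"
  using is_partition_less[of a n i j] by (cases "i = j") auto

lemma is_partition_cell_subset_X: "is_partition a n \<Longrightarrow> i < n \<Longrightarrow> cell a i \<subseteq> X"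
  using is_partition_le[of a n 0 i] is_partition_le[of a n "Suc i" n]
  by (auto simp: is_partition_def X_def)

lemma is_partition_piece_subset_X: "is_partition a n \<Longrightarrow> i < n \<Longrightarrow> piece a i \<subseteq> X"
  using is_partition_cell_subset_X[of a n i] by auto

lemma X_eq_Union_cells:
  assumes "is_partition a n"
  shows "X = (\<Union>i<n. cell a i)"
proof
  show "X \<subseteq> (\<Union>i<n. cell a i)"
  proof
    fix x assume "x \<in> X"
    define I where "I = {i. i \<le> n \<and> a i \<le> x}"
    define i where "i = Max I"
    have fin: "finite I" by (auto simp: I_def)
    have "0 \<in> I" using assms \<open>x \<in> X\<close> by (auto simp: I_def is_partition_def X_def)
    then have "i \<in> I" using Max_in[OF fin] by (auto simp: i_def)
    then have i: "i \<le> n" "a i \<le> x" by (auto simp: I_def)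
    have "i \<noteq> n" using i assms \<open>x \<in> X\<close> by (auto simp: is_partition_def X_def)
    moreover have "\<not> a (Suc i) \<le> x" if "Suc i \<le> n"
      using Max_ge[OF fin, of "Suc i"] that unfolding i_def[symmetric] by (auto simp: I_def)
    ultimately show "x \<in> (\<Union>i<n. cell a i)" using i by force
  qed
qed (use is_partition_cell_subset_X[OF assms] in blast)

lemma is_partition_cell_unique:
  assumes "is_partition a n" "i < n" "j < n" "x \<in> cell a i" "x \<in> cell a j"
  shows "i = j"
proof (rule ccontr)
  have *: False if "k < l" "l < n" "x \<in> cell a k" "x \<in> cell a l" for k l
    using is_partition_le[OF assms(1), of "Suc k" l] that by auto
  assume "i \<noteq> j"
  then show False using *[of i j] *[of j i] assms by linarith
qed

lemma is_partition_pieces_disjoint: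
  "is_partition a n \<Longrightarrow> disjoint_family_on (piece a) {..<n}"
  unfolding disjoint_family_on_def
proof (intro ballI impI)
  fix i j assume "is_partition a n" "i \<in> {..<n}" "j \<in> {..<n}" "i \<noteq> j"
  then show "piece a i \<inter> piece a j = {}"
    using is_partition_cell_unique[of a n i j] by fastforce
qed

lemma is_partition_avoiding:
  assumes "finite F"
  obtains a n where "is_partition a n" "\<And>i. i < n \<Longrightarrow> piece a i \<inter> F = {}"
proof -
  define T where "T = {0, 1} \<union> (F \<inter> {0<..<1::real})"
  define L where "L = sorted_list_of_set T"
  define n where "n = length L - 1"
  have "finite T" using assms by (simp add: T_def)
  then have set_L: "set L = T" and sorted: "sorted_wrt (<) L"
    by (simp_all add: L_def)
  have T01: "t \<in> {0..1}" if "t \<in> T" for t using that by (auto simp: T_def)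
  have less: "L ! i < L ! k" if "i < k" "k < length L" for i k
    using sorted_wrt_nth_less[OF sorted that] .
  have less_idx: "i < k" if "L ! i < L ! k" "i < length L" "k < length L" for i k
    using less[of k i] that by (cases i k rule: linorder_cases) auto
  obtain k0 k1 where k: "k0 < length L" "L ! k0 = 0" "k1 < length L" "L ! k1 = 1"
    using set_L by (metis T_def in_set_conv_nth insertI1 insertI2 UnI1)
  then have nL: "n < length L" by (simp add: n_def)
  have inT: "L ! i \<in> T" if "i < length L" for i using set_L that nth_mem by blast
  have "L ! 0 = 0"
    using k inT[of 0] T01 less[of 0 k0] by (cases "k0 = 0") fastforce+
  moreover have "L ! n = 1"
    using k inT[of n] T01 less[of k1 n] nL by (cases "k1 = n") (fastforce simp: n_def)+
  ultimately have "is_partition (\<lambda>i. L ! i) n"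
    using less nL by (auto simp: is_partition_def)
  moreover have "piece (\<lambda>i. L ! i) i \<inter> F = {}" if "i < n" for i
  proof (rule ccontr)
    assume "piece (\<lambda>i. L ! i) i \<inter> F \<noteq> {}"
    then obtain s where s: "s \<in> F" "L ! i < s" "s < L ! Suc i" by auto
    have "s \<in> T" using s T01[OF inT[of i]] T01[OF inT[of "Suc i"]] that nL by (auto simp: T_def)
    then obtain k where "k < length L" "L ! k = s" using set_L by (metis in_set_conv_nth)
    then show False using less_idx[of i k] less_idx[of k "Suc i"] s that nL by auto
  qed
  ultimately show ?thesis using that by blast
qed

text \<open>Outside X no cell contains x and the value of glue is unspecified.\<close>

definition glue :: "(nat \<Rightarrow> real) \<Rightarrow> nat \<Rightarrow> (nat \<Rightarrow> real \<Rightarrow> real) \<Rightarrow> real \<Rightarrow> real" where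
  "glue a n F x = F (THE i. i < n \<and> x \<in> cell a i) x"

lemma glue_eq: "is_partition a n \<Longrightarrow> i < n \<Longrightarrow> x \<in> cell a i \<Longrightarrow> glue a n F x = F i x"
  unfolding glue_def using is_partition_cell_unique[of a n] by (metis (no_types, lifting) the_equality)

lemma strict_mono_on_X_glued:
  assumes a: "is_partition a n" and b: "is_partition b n"
    and mono: "\<And>i. i < n \<Longrightarrow> strict_mono_on (cell a i) \<phi>"
    and onto: "\<And>i. i < n \<Longrightarrow> \<phi> ` cell a i = cell b i"
  shows "strict_mono_on X \<phi>" "\<phi> ` X = X"
proof -
  show "\<phi> ` X = X"
    using onto by (simp add: X_eq_Union_cells[OF a] X_eq_Union_cells[OF b, symmetric] image_UN)
  show "strict_mono_on X \<phi>"
  proof (rule strict_mono_onI)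
    fix x y assume "x \<in> X" "y \<in> X" "x < y"
    then obtain i j where ij: "i < n" "x \<in> cell a i" "j < n" "y \<in> cell a j"
      using X_eq_Union_cells[OF a] by blast
    have "\<not> j < i" using is_partition_le[OF a, of "Suc j" i] ij \<open>x < y\<close> by auto
    then consider "i = j" | "i < j" by linarith
    then show "\<phi> x < \<phi> y"
    proof cases
      case 1
      then show ?thesis using strict_mono_onD[OF mono[OF ij(1)] ij(2) _ \<open>x < y\<close>] ij(4) by simp
    next
      case 2
      have "\<phi> x < b (Suc i)" "b j \<le> \<phi> y" using onto ij by fastforce+
      then show ?thesis using is_partition_le[OF b, of "Suc i" j] 2 ij by linarith
    qed
  qed
qed

section \<open>Increasing homeomorphisms of X\<close>

lemma continuous_on_X_if_mono_onto:
  assumes mono: "mono_on X \<phi>" and onto: "\<phi> ` X = X"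
  shows "continuous_on X \<phi>"
proof -
  define \<Phi> where "\<Phi> x = (if x \<in> X then \<phi> x else x)" for x
  have "\<phi> x \<in> X" if "x \<in> X" for x using that onto by blast
  then have "\<Phi> x \<le> \<Phi> y" if "x \<le> y" for x y
    using that mono_onD[OF mono, of x y] by (fastforce simp: \<Phi>_def X_def)
  moreover have "range \<Phi> = UNIV"
    using onto by (auto simp: \<Phi>_def image_iff)
  ultimately have "continuous_on UNIV \<Phi>" by (intro continuous_onI_mono) auto
  then have "continuous_on X \<Phi>" by (rule continuous_on_subset) simp
  then show ?thesis by (rule continuous_on_cong[THEN iffD1, rotated 2]) (auto simp: \<Phi>_def)
qed

lemma strict_mono_on_inv_into:
  fixes \<phi> :: "'a::linorder \<Rightarrow> 'b::linorder"
  assumes "strict_mono_on A \<phi>"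
  shows "strict_mono_on (\<phi> ` A) (inv_into A \<phi>)"
proof (rule strict_mono_onI)
  fix r s assume "r \<in> \<phi> ` A" "s \<in> \<phi> ` A" "r < s"
  then obtain x y where "x \<in> A" "y \<in> A" "r = \<phi> x" "s = \<phi> y" by blast
  then show "inv_into A \<phi> r < inv_into A \<phi> s"
    using assms \<open>r < s\<close> strict_mono_on_imp_inj_on[OF assms]
    by (simp add: strict_mono_on_less)
qed

lemma ord_homeo_if_strict_mono_onto:
  assumes mono: "strict_mono_on X \<phi>" and onto: "\<phi> ` X = X"
  shows "ord_homeo \<phi>"
proof -
  have bij: "bij_betw \<phi> X X" using strict_mono_on_imp_inj_on[OF mono] onto by (simp add: bij_betw_def)
  have mono': "strict_mono_on X (inv_into X \<phi>)" using strict_mono_on_inv_into[OF mono] onto by simp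
  have onto': "inv_into X \<phi> ` X = X" using bij_betw_inv_into[OF bij] by (simp add: bij_betw_def)
  have "homeomorphism X X \<phi> (inv_into X \<phi>)"
    unfolding homeomorphism_def
  proof (intro conjI ballI)
    show "continuous_on X \<phi>" "continuous_on X (inv_into X \<phi>)"
      using continuous_on_X_if_mono_onto strict_mono_on_imp_mono_on mono mono' onto onto' by blast+
    show "inv_into X \<phi> (\<phi> x) = x" if "x \<in> X" for x using bij that by (simp add: bij_betw_inv_into_left)
    show "\<phi> (inv_into X \<phi> y) = y" if "y \<in> X" for y using bij that by (simp add: bij_betw_inv_into_right)
  qed (use onto onto' in simp_all)
  then show ?thesis unfolding ord_homeo_def using strict_mono_on_imp_mono_on[OF mono] by blast
qed

lemma sum_lengths_eq_if_tiling:
  fixes c d :: "nat \<Rightarrow> real"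
  assumes "p \<le> q" and cd: "\<And>i. i < n \<Longrightarrow> c i \<le> d i"
    and disj: "disjoint_family_on (\<lambda>i. {c i<..<d i}) {..<n}"
    and sub: "(\<Union>i<n. {c i<..<d i}) \<subseteq> {p..q}"
    and gaps: "finite ({p..q} - (\<Union>i<n. {c i<..<d i}))"
  shows "(\<Sum>i<n. d i - c i) = q - p"
proof -
  let ?U = "\<Union>i<n. {c i<..<d i}"
  have "q - p = measure lborel (?U \<union> ({p..q} - ?U))" using sub \<open>p \<le> q\<close> by (simp add: Un_absorb1)
  also have "\<dots> = measure lborel ?U"
    using gaps by (intro measure_Un_null_set finite_imp_null_set_lborel) auto
  also have "\<dots> = (\<Sum>i<n. measure lborel {c i<..<d i})"
    using disj cd by (intro measure_finite_Union) auto
  also have "\<dots> = (\<Sum>i<n. d i - c i)" using cd by simp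
  finally show ?thesis by simp
qed

lemma open_bounded_interval_eq:
  fixes S :: "real set"
  assumes "open S" "is_interval S" "bounded S" "S \<noteq> {}"
  shows "Inf S < Sup S \<and> S = {Inf S<..<Sup S}"
proof -
  have bdd: "bdd_below S" "bdd_above S"
    using \<open>bounded S\<close> by (rule bounded_imp_bdd_below, rule bounded_imp_bdd_above)
  have inside: "Inf S < x \<and> x < Sup S" if x: "x \<in> S" for x
  proof -
    obtain e where "e > 0" "ball x e \<subseteq> S" using \<open>open S\<close> x by (rule openE)
    moreover have "x - e / 2 \<in> ball x e" "x + e / 2 \<in> ball x e" using \<open>e > 0\<close> by (simp_all add: dist_real_def)
    ultimately have "x - e / 2 \<in> S" "x + e / 2 \<in> S" by blast+
    then have "Inf S \<le> x - e / 2" "x + e / 2 \<le> Sup S"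
      using cInf_lower[OF _ bdd(1)] cSup_upper[OF _ bdd(2)] by blast+
    then show ?thesis using \<open>e > 0\<close> by linarith
  qed
  have "t \<in> S" if t: "Inf S < t" "t < Sup S" for t
  proof -
    obtain y z where "y \<in> S" "y < t" "z \<in> S" "t < z"
      using t cInf_less_iff[OF \<open>S \<noteq> {}\<close> bdd(1)] less_cSup_iff[OF \<open>S \<noteq> {}\<close> bdd(2)] by blast
    then show ?thesis using mem_is_interval_1_I[OF \<open>is_interval S\<close>, of y z t] by simp
  qed
  then have "S = {Inf S<..<Sup S}" using inside by auto
  moreover obtain x where "x \<in> S" using \<open>S \<noteq> {}\<close> by blast
  ultimately show ?thesis using inside by force
qed

section \<open>Piecewise rigid and piecewise continuous bijections\<close>

definition rigid_on :: "real set \<Rightarrow> (real \<Rightarrow> real) \<Rightarrow> bool" where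
  "rigid_on P f \<longleftrightarrow> (\<exists>c. (\<forall>x\<in>P. f x = x + c) \<or> (\<forall>x\<in>P. f x = - x + c))"

lemma IET_hat_iff:
  "f \<in> IET_hat \<longleftrightarrow> bij_betw f X X \<and> (\<exists>a n. is_partition a n \<and> (\<forall>i<n. rigid_on (piece a i) f))"
  by (auto simp: IET_hat_def is_partition_def rigid_on_def)

lemma continuous_on_if_rigid_on:
  assumes "rigid_on P f"
  shows "continuous_on P f"
proof -
  obtain c where "(\<forall>x\<in>P. f x = x + c) \<or> (\<forall>x\<in>P. f x = - x + c)"
    using assms by (auto simp: rigid_on_def)
  then show ?thesis
  proof
    assume e: "\<forall>x\<in>P. f x = x + c"
    have "continuous_on P (\<lambda>x. x + c)" by (intro continuous_intros)
    then show ?thesis by (rule continuous_on_eq) (use e in auto)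
  next
    assume e: "\<forall>x\<in>P. f x = - x + c"
    have "continuous_on P (\<lambda>x. - x + c)" by (intro continuous_intros)
    then show ?thesis by (rule continuous_on_eq) (use e in auto)
  qed
qed

lemma rigid_on_inv_into:
  assumes "rigid_on P f" "inj_on f A" "P \<subseteq> A" "Q \<subseteq> f ` P"
  shows "rigid_on Q (inv_into A f)"
proof -
  have preimage: "\<exists>x\<in>P. f x = y \<and> inv_into A f y = x" if "y \<in> Q" for y
    using that assms(2-4) by (auto simp: subset_iff)
  obtain c where "(\<forall>x\<in>P. f x = x + c) \<or> (\<forall>x\<in>P. f x = - x + c)"
    using assms(1) by (auto simp: rigid_on_def)
  then have "(\<forall>y\<in>Q. inv_into A f y = y + - c) \<or> (\<forall>y\<in>Q. inv_into A f y = - y + c)"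
  proof
    assume "\<forall>x\<in>P. f x = x + c"
    then have "inv_into A f y = y + - c" if "y \<in> Q" for y using preimage[OF that] by auto
    then show ?thesis by blast
  next
    assume "\<forall>x\<in>P. f x = - x + c"
    then have "inv_into A f y = - y + c" if "y \<in> Q" for y using preimage[OF that] by auto
    then show ?thesis by blast
  qed
  then show ?thesis unfolding rigid_on_def by blast
qed

locale pc_bijection =
  fixes u :: "real \<Rightarrow> real" and a :: "nat \<Rightarrow> real" and n :: nat
  assumes bij: "bij_betw u X X"
    and partition: "is_partition a n"
    and continuous_on_piece: "\<And>i. i < n \<Longrightarrow> continuous_on (piece a i) u"
begin

lemma inj_on_X: "inj_on u X"
  using bij by (simp add: bij_betw_def)

lemma inj_on_piece: "i < n \<Longrightarrow> inj_on u (piece a i)"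
  using inj_on_subset[OF inj_on_X is_partition_piece_subset_X[OF partition]] .

lemma image_piece_subset_X: "i < n \<Longrightarrow> u ` piece a i \<subseteq> X"
  using bij_betw_imp_surj_on[OF bij] is_partition_piece_subset_X[OF partition] by blast

definition img_lo :: "nat \<Rightarrow> real" where
  "img_lo i = Inf (u ` piece a i)"

definition img_hi :: "nat \<Rightarrow> real" where
  "img_hi i = Sup (u ` piece a i)"

lemma image_piece:
  assumes i: "i < n"
  shows "img_lo i < img_hi i" "u ` piece a i = {img_lo i<..<img_hi i}"
proof -
  have "open (u ` piece a i)"
    using injective_into_1d_imp_open_map_UNIV[OF _ continuous_on_piece[OF i] inj_on_piece[OF i]] by simp
  moreover have "is_interval (u ` piece a i)"
    using connected_continuous_image[OF continuous_on_piece[OF i]] by (simp add: is_interval_connected_1)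
  moreover have "bounded (u ` piece a i)"
    using image_piece_subset_X[OF i] by (rule bounded_subset[rotated]) (simp add: X_def)
  moreover have "u ` piece a i \<noteq> {}" using partition i by (auto simp: is_partition_def)
  ultimately show "img_lo i < img_hi i" "u ` piece a i = {img_lo i<..<img_hi i}"
    using open_bounded_interval_eq unfolding img_lo_def img_hi_def by blast+
qed

lemma monotone_on_piece: "i < n \<Longrightarrow> strict_mono_on (piece a i) u \<or> strict_antimono_on (piece a i) u"
  using injective_eq_monotone_map[of "piece a i" u] continuous_on_piece inj_on_piece
  by (simp add: is_interval_connected_1)

lemma image_pieces_disjoint: "disjoint_family_on (\<lambda>i. u ` piece a i) {..<n}"
  unfolding disjoint_family_on_def
proof (intro ballI impI)
  fix i j assume "i \<in> {..<n}" "j \<in> {..<n}" "i \<noteq> j"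
  then have "piece a i \<inter> piece a j = {}"
    using is_partition_pieces_disjoint[OF partition] by (simp add: disjoint_family_on_def)
  then show "u ` piece a i \<inter> u ` piece a j = {}"
    using inj_on_image_Int[OF inj_on_X] is_partition_piece_subset_X[OF partition] \<open>i \<in> _\<close> \<open>j \<in> _\<close>
    by (metis image_empty lessThan_iff)
qed

lemma X_minus_image_pieces: "X - (\<Union>i<n. u ` piece a i) \<subseteq> u ` a ` {..<n}"
proof
  fix y assume y: "y \<in> X - (\<Union>i<n. u ` piece a i)"
  then obtain x where "x \<in> X" "y = u x" using bij_betw_imp_surj_on[OF bij] by blast
  then obtain i where i: "i < n" "x \<in> cell a i" using X_eq_Union_cells[OF partition] by blast
  then have "x = a i" using y \<open>y = u x\<close> by fastforce
  then show "y \<in> u ` a ` {..<n}" using i \<open>y = u x\<close> by blast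
qed

lemma sum_image_lengths: "(\<Sum>i<n. img_hi i - img_lo i) = 1"
proof -
  let ?J = "\<lambda>i. {img_lo i<..<img_hi i}"
  have U: "(\<Union>i<n. ?J i) = (\<Union>i<n. u ` piece a i)"
    using image_piece(2) by (intro SUP_cong) simp_all
  have "(\<Union>i<n. u ` piece a i) \<subseteq> X" using image_piece_subset_X by blast
  then have sub: "(\<Union>i<n. ?J i) \<subseteq> {0..1}"
    unfolding U X_def using atLeastLessThan_subseteq_atLeastAtMost_iff by blast
  have "{0..1} = insert 1 X" by (auto simp: X_def)
  then have "{0..1} - (\<Union>i<n. u ` piece a i) \<subseteq> insert 1 (u ` a ` {..<n})"
    using X_minus_image_pieces by blast
  then have fin: "finite ({0..1} - (\<Union>i<n. ?J i))"
    unfolding U by (rule finite_subset) simp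
  have disj: "disjoint_family_on ?J {..<n}"
    unfolding disjoint_family_on_def
  proof (intro ballI impI)
    fix i j assume "i \<in> {..<n}" "j \<in> {..<n}" "i \<noteq> j"
    then show "?J i \<inter> ?J j = {}"
      using image_pieces_disjoint unfolding disjoint_family_on_def
      by (simp flip: image_piece(2))
  qed
  show ?thesis
    using sum_lengths_eq_if_tiling[OF _ _ disj sub fin] image_piece(1) by (simp add: less_imp_le)
qed

text \<open>Each piece of b avoids the images of the breakpoints of a, so it is covered by the disjoint
  open intervals u ` piece a j; being connected, it lies in one of them.\<close>

lemma partition_within_image_pieces:
  obtains b m where "is_partition b m" "\<And>k. k < m \<Longrightarrow> \<exists>i<n. piece b k \<subseteq> u ` piece a i"
proof -
  define E where "E = u ` a ` {..<n}"
  have "finite E" by (simp add: E_def)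
  then obtain b m where b: "is_partition b m" and avoid: "\<And>k. k < m \<Longrightarrow> piece b k \<inter> E = {}"
    using is_partition_avoiding by blast
  have "\<exists>i<n. piece b k \<subseteq> u ` piece a i" if k: "k < m" for k
  proof -
    have "piece b k \<subseteq> X - E" using avoid[OF k] is_partition_piece_subset_X[OF b k] by blast
    then have cover: "piece b k \<subseteq> (\<Union>i<n. u ` piece a i)"
      using X_minus_image_pieces[folded E_def] by blast
    have "piece b k \<noteq> {}" using b k by (auto simp: is_partition_def)
    then obtain i where i: "i < n" "u ` piece a i \<inter> piece b k \<noteq> {}" using cover by blast
    define V where "V = (\<Union>j\<in>{..<n} - {i}. u ` piece a j)"
    have "open (u ` piece a i)" "open V" using image_piece(2) i(1) by (auto simp: V_def)
    moreover have "u ` piece a i \<inter> V = {}"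
      using image_pieces_disjoint i(1) unfolding V_def disjoint_family_on_def by blast
    moreover have cover_i: "piece b k \<subseteq> u ` piece a i \<union> V" using cover i(1) unfolding V_def by blast
    ultimately have "V \<inter> piece b k = {}"
      using connectedD[OF connected_Ioo, of "u ` piece a i" V] i(2) by blast
    then have "piece b k \<subseteq> u ` piece a i" using cover_i by blast
    then show ?thesis using i(1) by blast
  qed
  then show ?thesis using b that by blast
qed

lemma pc_bijection_inv_into:
  obtains b m where "pc_bijection (inv_into X u) b m"
proof -
  obtain b m where b: "is_partition b m" and sub: "\<And>k. k < m \<Longrightarrow> \<exists>i<n. piece b k \<subseteq> u ` piece a i"
    using partition_within_image_pieces by blast
  have "continuous_on (piece b k) (inv_into X u)" if k: "k < m" for k
  proof -
    obtain i where i: "i < n" and bk: "piece b k \<subseteq> u ` piece a i" using sub[OF k] by blast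
    obtain w where w: "homeomorphism (piece a i) (u ` piece a i) u w"
      using homeomorphism_into_1d[OF path_connected_Ioo
          continuous_on_piece[OF i] refl inj_on_piece[OF i]] by blast
    have eq: "w y = inv_into X u y" if "y \<in> u ` piece a i" for y
      using w that inj_on_X is_partition_piece_subset_X[OF partition i]
      by (auto simp: homeomorphism_def)
    have "continuous_on (piece b k) w"
      using w bk by (auto simp: homeomorphism_def intro: continuous_on_subset)
    then show ?thesis by (rule continuous_on_eq) (use eq bk in blast)
  qed
  then have "pc_bijection (inv_into X u) b m"
    using b bij_betw_inv_into[OF bij] by unfold_locales
  then show ?thesis using that by blast
qed

definition stack :: "nat \<Rightarrow> real" where
  "stack k = (\<Sum>j<k. img_hi j - img_lo j)"

lemma stack_Suc: "stack (Suc i) = stack i + (img_hi i - img_lo i)"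
  by (simp add: stack_def)

lemma is_partition_stack: "is_partition stack n"
  using sum_image_lengths image_piece(1) by (auto simp: is_partition_def stack_def)

text \<open>The distance of u x from the end of its image interval that u approaches at a i;
  it increases on the piece whatever the orientation of u.\<close>

definition rel_pos :: "nat \<Rightarrow> real \<Rightarrow> real" where
  "rel_pos i x = (if strict_mono_on (piece a i) u then u x - img_lo i else img_hi i - u x)"

lemma strict_mono_on_rel_pos: "i < n \<Longrightarrow> strict_mono_on (piece a i) (rel_pos i)"
  using monotone_on_piece[of i]
  by (auto simp: rel_pos_def strict_mono_on_def monotone_on_def)

lemma rel_pos_image: "i < n \<Longrightarrow> rel_pos i ` piece a i = {0<..<img_hi i - img_lo i}"
proof
  assume i: "i < n"
  show "rel_pos i ` piece a i \<subseteq> {0<..<img_hi i - img_lo i}"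
    using image_piece(2)[OF i] by (auto simp: rel_pos_def)
  show "{0<..<img_hi i - img_lo i} \<subseteq> rel_pos i ` piece a i"
  proof
    fix t assume t: "t \<in> {0<..<img_hi i - img_lo i}"
    define y where "y = (if strict_mono_on (piece a i) u then img_lo i + t else img_hi i - t)"
    have "y \<in> u ` piece a i" using image_piece(2)[OF i] t by (auto simp: y_def)
    then obtain x where "x \<in> piece a i" "u x = y" by blast
    then show "t \<in> rel_pos i ` piece a i" by (auto simp: rel_pos_def y_def intro!: image_eqI[of _ _ x])
  qed
qed

definition straighten :: "real \<Rightarrow> real" where
  "straighten = glue a n (\<lambda>i x. if x = a i then stack i else stack i + rel_pos i x)"

lemma straighten_piece: "i < n \<Longrightarrow> x \<in> piece a i \<Longrightarrow> straighten x = stack i + rel_pos i x"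
  unfolding straighten_def by (subst glue_eq[OF partition]) auto

lemma straighten_point: "i < n \<Longrightarrow> straighten (a i) = stack i"
  unfolding straighten_def using partition by (subst glue_eq[OF partition]) (auto simp: is_partition_def)

lemma straighten_image_piece: "i < n \<Longrightarrow> straighten ` piece a i = piece stack i"
proof
  assume i: "i < n"
  show "straighten ` piece a i \<subseteq> piece stack i"
    using rel_pos_image[OF i] straighten_piece[OF i] by (force simp: stack_Suc)
  show "piece stack i \<subseteq> straighten ` piece a i"
  proof
    fix t assume t: "t \<in> piece stack i"
    then have "t - stack i \<in> rel_pos i ` piece a i" using rel_pos_image[OF i] by (simp add: stack_Suc)
    then obtain x where "x \<in> piece a i" "t - stack i = rel_pos i x" ..
    then show "t \<in> straighten ` piece a i" using straighten_piece[OF i] by force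
  qed
qed

lemma straighten_cell:
  assumes i: "i < n"
  shows "strict_mono_on (cell a i) straighten" "straighten ` cell a i = cell stack i"
proof -
  have cells: "cell a i = insert (a i) (piece a i)" "cell stack i = insert (stack i) (piece stack i)"
    using partition is_partition_stack i by (auto simp: is_partition_def)
  show "straighten ` cell a i = cell stack i"
    using straighten_image_piece[OF i] straighten_point[OF i] cells by simp
  show "strict_mono_on (cell a i) straighten"
  proof (rule strict_mono_onI)
    fix x y assume "x \<in> cell a i" "y \<in> cell a i" "x < y"
    then have y: "y \<in> piece a i" by auto
    show "straighten x < straighten y"
    proof (cases "x = a i")
      case True
      then show ?thesis using straighten_point[OF i] straighten_image_piece[OF i] y by force
    next
      case False
      then have "x \<in> piece a i" using \<open>x \<in> cell a i\<close> by auto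
      then show ?thesis
        using straighten_piece[OF i] y strict_mono_onD[OF strict_mono_on_rel_pos[OF i]] \<open>x < y\<close> by simp
    qed
  qed
qed

lemma strict_mono_on_straighten: "strict_mono_on X straighten" "straighten ` X = X"
  using strict_mono_on_X_glued[OF partition is_partition_stack] straighten_cell by blast+

lemma rigid_on_straightened:
  assumes i: "i < n"
  shows "rigid_on (piece stack i) (u \<circ> inv_into X straighten)"
proof -
  have inj: "inj_on straighten X" using strict_mono_on_imp_inj_on[OF strict_mono_on_straighten(1)] .
  have preimage: "\<exists>x\<in>piece a i. t = stack i + rel_pos i x \<and> (u \<circ> inv_into X straighten) t = u x"
    if "t \<in> piece stack i" for t
  proof -
    obtain x where x: "x \<in> piece a i" "t = straighten x"
      using straighten_image_piece[OF i] \<open>t \<in> piece stack i\<close> by blast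
    then have "inv_into X straighten t = x"
      using inj is_partition_piece_subset_X[OF partition i] by (auto intro: inv_into_f_f)
    then show ?thesis using x straighten_piece[OF i] by auto
  qed
  show ?thesis
  proof (cases "strict_mono_on (piece a i) u")
    case True
    then have "\<forall>t\<in>piece stack i. (u \<circ> inv_into X straighten) t = t + (img_lo i - stack i)"
      using preimage by (force simp: rel_pos_def)
    then show ?thesis unfolding rigid_on_def by blast
  next
    case False
    then have "\<forall>t\<in>piece stack i. (u \<circ> inv_into X straighten) t = - t + (img_hi i + stack i)"
      using preimage by (force simp: rel_pos_def)
    then show ?thesis unfolding rigid_on_def by blast
  qed
qed

lemma factor_right:
  obtains \<phi> g where "strict_mono_on X \<phi>" "\<phi> ` X = X" "g \<in> IET_hat" "\<forall>x\<in>X. u x = g (\<phi> x)"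
proof -
  have bij_straighten: "bij_betw straighten X X"
    using strict_mono_on_straighten strict_mono_on_imp_inj_on by (auto simp: bij_betw_def)
  have "bij_betw (u \<circ> inv_into X straighten) X X"
    using bij_betw_trans[OF bij_betw_inv_into[OF bij_straighten] bij] .
  then have "u \<circ> inv_into X straighten \<in> IET_hat"
    using is_partition_stack rigid_on_straightened unfolding IET_hat_iff by blast
  moreover have "\<forall>x\<in>X. u x = (u \<circ> inv_into X straighten) (straighten x)"
    using bij_straighten by (simp add: bij_betw_inv_into_left)
  ultimately show ?thesis using that strict_mono_on_straighten by blast
qed

end

lemma pc_bijection_if_PC_hat:
  assumes "h \<in> PC_hat"
  obtains a n where "pc_bijection h a n"
proof -
  obtain F where bij: "bij_betw h X X" and F: "finite F"
    and cont: "\<And>x. x \<in> X - F \<Longrightarrow> continuous (at x within X) h"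
    using assms by (auto simp: PC_hat_def)
  obtain a n where a: "is_partition a n" and avoid: "\<And>i. i < n \<Longrightarrow> piece a i \<inter> F = {}"
    using is_partition_avoiding[OF F] by blast
  have "continuous_on (piece a i) h" if i: "i < n" for i
  proof -
    have "continuous (at x within piece a i) h" if "x \<in> piece a i" for x
      using cont[of x] continuous_within_subset[of x X h] that avoid[OF i]
        is_partition_piece_subset_X[OF a i] by blast
    then show ?thesis by (simp add: continuous_on_eq_continuous_within)
  qed
  then have "pc_bijection h a n" using bij a by unfold_locales
  then show ?thesis using that by blast
qed

lemma pc_bijection_if_rigid_on:
  "bij_betw f X X \<Longrightarrow> is_partition a n \<Longrightarrow> (\<And>i. i < n \<Longrightarrow> rigid_on (piece a i) f) \<Longrightarrow> pc_bijection f a n"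
  by unfold_locales (auto intro: continuous_on_if_rigid_on)

lemma IET_hat_inv_into:
  assumes "f \<in> IET_hat"
  shows "inv_into X f \<in> IET_hat"
proof -
  obtain a n where bij: "bij_betw f X X" and a: "is_partition a n"
    and rigid: "\<And>i. i < n \<Longrightarrow> rigid_on (piece a i) f"
    using assms by (auto simp: IET_hat_iff)
  then interpret pc_bijection f a n by (rule pc_bijection_if_rigid_on)
  obtain b m where b: "is_partition b m" and sub: "\<And>k. k < m \<Longrightarrow> \<exists>i<n. piece b k \<subseteq> f ` piece a i"
    using partition_within_image_pieces by blast
  have "rigid_on (piece b k) (inv_into X f)" if "k < m" for k
    using sub[OF that] rigid inj_on_X is_partition_piece_subset_X[OF a] rigid_on_inv_into by metis
  then show ?thesis using bij_betw_inv_into[OF bij] b unfolding IET_hat_iff by blast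
qed

text \<open>Factor u\<inverse> = g \<circ> \<phi> on the right and invert both factors.\<close>

lemma (in pc_bijection) factor_left:
  obtains \<psi> f where "ord_homeo \<psi>" "f \<in> IET_hat" "\<forall>x\<in>X. u x = \<psi> (f x)"
proof -
  obtain b m where "pc_bijection (inv_into X u) b m" using pc_bijection_inv_into by blast
  then obtain \<phi> g where \<phi>: "strict_mono_on X \<phi>" "\<phi> ` X = X" and g: "g \<in> IET_hat"
    and inv_u: "\<forall>y\<in>X. inv_into X u y = g (\<phi> y)"
    by (rule pc_bijection.factor_right)
  have bij_\<phi>: "bij_betw \<phi> X X" using \<phi> strict_mono_on_imp_inj_on by (auto simp: bij_betw_def)
  have bij_g: "bij_betw g X X" using g by (simp add: IET_hat_iff)
  have "u x = inv_into X \<phi> (inv_into X g x)" if x: "x \<in> X" for x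
  proof -
    have ux: "u x \<in> X" using bij x by (auto simp: bij_betw_def)
    then have "g (\<phi> (u x)) = x" using inv_u bij x by (metis bij_betw_inv_into_left)
    then have "inv_into X g x = \<phi> (u x)"
      using bij_g bij_\<phi> ux by (metis bij_betw_apply bij_betw_inv_into_left)
    then show ?thesis using bij_\<phi> ux by (simp add: bij_betw_inv_into_left)
  qed
  moreover have "ord_homeo (inv_into X \<phi>)"
    using ord_homeo_if_strict_mono_onto strict_mono_on_inv_into[OF \<phi>(1)] \<phi>(2) bij_\<phi>
    by (metis bij_betw_def bij_betw_inv_into)
  ultimately show ?thesis using that IET_hat_inv_into[OF g] by blast
qed

theorem proposition2p5:
  assumes "h \<in> PC_hat"
  shows "\<exists>\<phi> \<psi> f g. ord_homeo \<phi> \<and> ord_homeo \<psi> \<and> f \<in> IET_hat \<and> g \<in> IET_hat \<and>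
           (\<forall>x\<in>X. h x = \<psi> (f x)) \<and> (\<forall>x\<in>X. h x = g (\<phi> x))"
proof -
  obtain a n where "pc_bijection h a n" using pc_bijection_if_PC_hat[OF assms] by blast
  then interpret pc_bijection h a n .
  obtain \<phi> g where "strict_mono_on X \<phi>" "\<phi> ` X = X" "g \<in> IET_hat" "\<forall>x\<in>X. h x = g (\<phi> x)"
    by (rule factor_right)
  moreover obtain \<psi> f where "ord_homeo \<psi>" "f \<in> IET_hat" "\<forall>x\<in>X. h x = \<psi> (f x)"
    by (rule factor_left)
  ultimately show ?thesis using ord_homeo_if_strict_mono_onto by blast
qed

end
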